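(* Let $T$ be a tree with edges $e_1,\ldots,e_m$. For $k\neq l$, the forest $T-\{e_k,e_l\}$ has three connected components, exactly one of which contains an end-vertex of both $e_k$ and $e_l$; let $m_1(e_k,e_l)$ and $m_2(e_k,e_l)$ be the numbers of edges in the other two components. Then $$WW_e(T)=2W_e(T)+\sum_{k=1}^{m-1}\sum_{l=k+1}^{m}m_1(e_k,e_l)\,m_2(e_k,e_l)-\binom{m}{2}.$$
   Context: The distance $d(e,f)$ between edges is the distance between $e$ and $f$ as vertices of the line graph. The edge-Wiener index is $W_e(G)=\sum_{\{e,f\}\subseteq E(G)}d(e,f)$ and the edge-hyper-Wiener index is $WW_e(G)=\frac12\sum_{\{e,f\}\subseteq E(G)}d(e,f)+\frac12\sum_{\{e,f\}\subseteq E(G)}d(e,f)^2$, sums over unordered pairs of distinct edges. *)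

theory Defs
  imports Complex_Main
begin

definition simple_graph :: "'a set \<Rightarrow> 'a set set \<Rightarrow> bool" where
  "simple_graph V E \<longleftrightarrow> finite V \<and> (\<forall>e\<in>E. \<exists>u v. u \<in> V \<and> v \<in> V \<and> u \<noteq> v \<and> e = {u, v})"

definition adj_rel :: "'a set set \<Rightarrow> ('a \<times> 'a) set" where
  "adj_rel E = {(u, v). {u, v} \<in> E}"

definition connected_graph :: "'a set \<Rightarrow> 'a set set \<Rightarrow> bool" where
  "connected_graph V E \<longleftrightarrow> (\<forall>u\<in>V. \<forall>v\<in>V. (u, v) \<in> (adj_rel E)\<^sup>*)"

definition is_cycle :: "'a set set \<Rightarrow> 'a list \<Rightarrow> bool" where
  "is_cycle E vs \<longleftrightarrow> length vs \<ge> 3 \<and> distinct vs \<and>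
     (\<forall>i < length vs. {vs ! i, vs ! ((i + 1) mod length vs)} \<in> E)"

definition acyclic_graph :: "'a set set \<Rightarrow> bool" where
  "acyclic_graph E \<longleftrightarrow> (\<nexists>vs. is_cycle E vs)"

definition tree :: "'a set \<Rightarrow> 'a set set \<Rightarrow> bool" where
  "tree V E \<longleftrightarrow> simple_graph V E \<and> V \<noteq> {} \<and> connected_graph V E \<and> acyclic_graph E"

definition line_adj :: "'a set set \<Rightarrow> ('a set \<times> 'a set) set" where
  "line_adj E = {(e, f). e \<in> E \<and> f \<in> E \<and> e \<noteq> f \<and> e \<inter> f \<noteq> {}}"

definition edge_dist :: "'a set set \<Rightarrow> 'a set \<Rightarrow> 'a set \<Rightarrow> nat" where
  "edge_dist E e f = (LEAST n. (e, f) \<in> (line_adj E) ^^ n)"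

(* sums over unordered pairs {e,f} of distinct edges = half the sums over ordered pairs *)
definition edge_pairs :: "'a set set \<Rightarrow> ('a set \<times> 'a set) set" where
  "edge_pairs E = {(e, f). e \<in> E \<and> f \<in> E \<and> e \<noteq> f}"

definition edge_wiener :: "'a set set \<Rightarrow> real" where
  "edge_wiener E = (\<Sum>(e, f)\<in>edge_pairs E. real (edge_dist E e f)) / 2"

definition edge_hyper_wiener :: "'a set set \<Rightarrow> real" where
  "edge_hyper_wiener E =
     (1/2) * ((\<Sum>(e, f)\<in>edge_pairs E. real (edge_dist E e f)) / 2)
   + (1/2) * ((\<Sum>(e, f)\<in>edge_pairs E. real (edge_dist E e f) ^ 2) / 2)"

definition components :: "'a set \<Rightarrow> 'a set set \<Rightarrow> 'a set set" where
  "components V E = {{v \<in> V. (u, v) \<in> (adj_rel E)\<^sup>*} | u. u \<in> V}"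

definition edges_in :: "'a set set \<Rightarrow> 'a set \<Rightarrow> nat" where
  "edges_in E C = card {g \<in> E. g \<subseteq> C}"

definition middle_components :: "'a set \<Rightarrow> 'a set set \<Rightarrow> 'a set \<Rightarrow> 'a set \<Rightarrow> 'a set set" where
  "middle_components V E e f =
     {C \<in> components V (E - {e, f}). C \<inter> e \<noteq> {} \<and> C \<inter> f \<noteq> {}}"

definition m12 :: "'a set \<Rightarrow> 'a set set \<Rightarrow> 'a set \<Rightarrow> 'a set \<Rightarrow> nat" where
  "m12 V E e f =
     (\<Prod>C\<in>components V (E - {e, f}) - middle_components V E e f. edges_in (E - {e, f}) C)"

end

(*
  In a tree, distinct edges e and f are at distance s(e,f) + 1 in the line graph, where s(e,f)
  is the number of edges separating them, i.e. lying strictly between them on the path that joins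
  them. Writing d = s + 1, the difference WW_e - 2 W_e is the sum of (d^2 - 3d)/2 over unordered
  pairs, which is the sum of s(s - 1)/2 minus the number of pairs, binomial(m, 2). Now s(s - 1)
  counts the ordered pairs (g, h) of distinct edges separating e from f, and two edges
  g, h both separate e from f exactly when e and f lie in the two outer components of T - {g, h}.
  Double counting therefore gives sum over {e, f} of s(s - 1)/2 = sum over {g, h} of m1 m2.
*)

theory Submission
  imports Defs
begin

section \<open>Ordered pairs of distinct elements\<close>

definition off_diag :: "'a set \<Rightarrow> ('a \<times> 'a) set" where
  "off_diag A = {(a, b). a \<in> A \<and> b \<in> A \<and> a \<noteq> b}"

lemma edge_pairs_eq_off_diag: "edge_pairs E = off_diag E"
  by (simp add: edge_pairs_def off_diag_def)

lemma off_diag_subset: "off_diag A \<subseteq> A \<times> A"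
  by (auto simp: off_diag_def)

lemma off_diag_mono: "A \<subseteq> B \<Longrightarrow> off_diag A \<subseteq> off_diag B"
  by (auto simp: off_diag_def)

lemma finite_off_diag: "finite A \<Longrightarrow> finite (off_diag A)"
  using off_diag_subset by (rule finite_subset) simp

lemma card_off_diag:
  assumes "finite A"
  shows "card (off_diag A) = card A * (card A - 1)"
proof -
  have "off_diag A = A \<times> A - (\<lambda>a. (a, a)) ` A" by (auto simp: off_diag_def)
  moreover have "card ((\<lambda>a. (a, a)) ` A) = card A" by (rule card_image) (auto simp: inj_on_def)
  ultimately show ?thesis
    using assms
    by (simp add: card_Diff_subset card_cartesian_product image_subset_iff diff_mult_distrib2)
qed

lemma sum_card_filter_swap:
  assumes "finite A" "finite B"
  shows "(\<Sum>x\<in>A. card {y \<in> B. P x y}) = (\<Sum>y\<in>B. card {x \<in> A. P x y})"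
proof -
  have card_filter: "card {z \<in> C. Q z} = (\<Sum>z\<in>C. if Q z then 1 else 0)" if "finite C" for C Q
    using sum.inter_filter[OF that, of "\<lambda>_. 1 :: nat" Q] by simp
  show ?thesis
    using assms by (simp add: card_filter sum.swap[of _ A])
qed

lemma sum_off_diag_reindex:
  assumes "bij_betw \<phi> A B"
  shows "(\<Sum>(x, y)\<in>off_diag B. f x y) = (\<Sum>(k, l)\<in>off_diag A. f (\<phi> k) (\<phi> l))"
proof -
  have inj: "inj_on \<phi> A" and img: "\<phi> ` A = B" using assms by (simp_all add: bij_betw_def)
  have "off_diag B = map_prod \<phi> \<phi> ` off_diag A"
    using inj by (auto simp: off_diag_def img[symmetric] inj_on_eq_iff)
  moreover have "inj_on (map_prod \<phi> \<phi>) (off_diag A)"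
    using inj by (auto simp: inj_on_def off_diag_def)
  ultimately show ?thesis by (simp add: sum.reindex case_prod_beta)
qed

lemma sum_off_diag_symmetric:
  fixes f :: "nat \<Rightarrow> nat \<Rightarrow> 'b :: comm_semiring_1"
  assumes sym: "\<And>k l. f k l = f l k"
  shows "(\<Sum>(k, l)\<in>off_diag {1..m}. f k l) = 2 * (\<Sum>k = 1..m - 1. \<Sum>l = k + 1..m. f k l)"
proof -
  define U where "U = {(k, l). 1 \<le> k \<and> k < l \<and> l \<le> m}"
  have split: "off_diag {1..m} = U \<union> prod.swap ` U" and disj: "U \<inter> prod.swap ` U = {}"
    by (auto simp: off_diag_def U_def)
  have finU: "finite U" by (rule finite_subset[of _ "{1..m} \<times> {1..m}"]) (auto simp: U_def)
  have swap: "(\<Sum>(k, l)\<in>prod.swap ` U. f k l) = (\<Sum>(k, l)\<in>U. f k l)"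
    by (subst sum.reindex) (auto simp: sym case_prod_beta)
  have "(\<Sum>(k, l)\<in>off_diag {1..m}. f k l) = 2 * (\<Sum>(k, l)\<in>U. f k l)"
    unfolding split using finU by (simp add: sum.union_disjoint disj swap mult_2)
  also have "U = Sigma {1..m - 1} (\<lambda>k. {k + 1..m})" by (auto simp: U_def)
  finally show ?thesis by (simp add: sum.Sigma)
qed

section \<open>Reachability\<close>

definition reachable :: "'a set set \<Rightarrow> 'a \<Rightarrow> 'a \<Rightarrow> bool" where
  "reachable F x y \<longleftrightarrow> (x, y) \<in> (adj_rel F)\<^sup>*"

lemma reachable_refl [simp]: "reachable F x x"
  by (simp add: reachable_def)

lemma reachable_trans: "reachable F x y \<Longrightarrow> reachable F y z \<Longrightarrow> reachable F x z"
  unfolding reachable_def by (rule rtrancl_trans)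

lemma reachable_edge: "{x, y} \<in> F \<Longrightarrow> reachable F x y"
  unfolding reachable_def adj_rel_def by (rule r_into_rtrancl) simp

lemma reachable_sym: "reachable F x y \<Longrightarrow> reachable F y x"
  unfolding reachable_def
proof (induction rule: rtrancl_induct)
  case (step y z)
  then have "(z, y) \<in> adj_rel F" by (simp add: adj_rel_def insert_commute)
  with step.IH show ?case by (meson converse_rtrancl_into_rtrancl)
qed simp

lemma reachable_commute: "reachable F x y \<longleftrightarrow> reachable F y x"
  by (meson reachable_sym)

lemma reachable_mono: "F \<subseteq> G \<Longrightarrow> reachable F x y \<Longrightarrow> reachable G x y"
proof -
  assume "F \<subseteq> G"
  then have "adj_rel F \<subseteq> adj_rel G" unfolding adj_rel_def by auto
  then show "reachable F x y \<Longrightarrow> reachable G x y" unfolding reachable_def using rtrancl_mono by blast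
qed

lemma reachable_remove_edge:
  assumes "reachable F x y"
  shows "reachable (F - {g}) x y \<or>
    (\<exists>a b. g = {a, b} \<and> reachable (F - {g}) x a \<and> reachable (F - {g}) b y)"
  using assms unfolding reachable_def[of F]
proof (induction rule: rtrancl_induct)
  case (step y z)
  have yz: "{y, z} \<in> F" using step.hyps(2) by (simp add: adj_rel_def)
  show ?case
  proof (cases "g = {y, z}")
    case False
    then have yz': "reachable (F - {g}) y z" using yz by (intro reachable_edge) auto
    from step.IH show ?thesis
    proof
      assume "reachable (F - {g}) x y"
      then have "reachable (F - {g}) x z" using yz' by (rule reachable_trans)
      then show ?thesis ..
    next
      assume "\<exists>a b. g = {a, b} \<and> reachable (F - {g}) x a \<and> reachable (F - {g}) b y"
      then obtain a b where "g = {a, b}" "reachable (F - {g}) x a" "reachable (F - {g}) b z"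
        using reachable_trans[OF _ yz'] by blast
      then show ?thesis by blast
    qed
  next
    case True
    from step.IH True obtain u where u: "u \<in> g" "reachable (F - {g}) x u" by auto
    show ?thesis
    proof (cases "u = z")
      case False
      with u(1) True have "g = {u, z}" by auto
      with u(2) show ?thesis by (intro disjI2 exI[of _ u] exI[of _ z]) simp
    qed (use u in simp)
  qed
qed simp

definition simple_path :: "'a set set \<Rightarrow> 'a list \<Rightarrow> bool" where
  "simple_path F xs \<longleftrightarrow>
     xs \<noteq> [] \<and> distinct xs \<and> (\<forall>i. Suc i < length xs \<longrightarrow> {xs ! i, xs ! Suc i} \<in> F)"

lemma reachable_imp_simple_path:
  assumes "reachable F x y"
  obtains xs where "simple_path F xs" "hd xs = x" "last xs = y"
proof -
  from assms have "\<exists>xs. simple_path F xs \<and> hd xs = x \<and> last xs = y"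
    unfolding reachable_def
  proof (induction rule: rtrancl_induct)
    case base
    show ?case by (intro exI[of _ "[x]"]) (simp add: simple_path_def)
  next
    case (step y z)
    then obtain xs where xs: "simple_path F xs" "hd xs = x" "last xs = y" by blast
    have yz: "{y, z} \<in> F" using step.hyps(2) by (simp add: adj_rel_def)
    show ?case
    proof (cases "z \<in> set xs")
      case True
      then obtain i where i: "i < length xs" "xs ! i = z" by (metis in_set_conv_nth)
      \<comment> \<open>the walk already visited \<open>z\<close>: cut it off there\<close>
      have "simple_path F (take (Suc i) xs)" using xs(1) i by (auto simp: simple_path_def)
      moreover have "hd (take (Suc i) xs) = x" using xs i by (simp add: hd_take simple_path_def)
      moreover have "last (take (Suc i) xs) = z" using i by (simp add: take_Suc_conv_app_nth)
      ultimately show ?thesis by blast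
    next
      case False
      have "xs ! (length xs - 1) = y" using xs by (simp add: last_conv_nth simple_path_def)
      then have "simple_path F (xs @ [z])"
        using xs(1) False yz unfolding simple_path_def
        by (auto simp: nth_append less_Suc_eq) (metis diff_Suc_Suc diff_zero)
      moreover have "hd (xs @ [z]) = x" using xs by (simp add: simple_path_def)
      ultimately show ?thesis by auto
    qed
  qed
  with that show ?thesis by blast
qed

section \<open>Bridges and separating edges in trees\<close>

lemma tree_edgeE:
  assumes "tree V E" "e \<in> E"
  obtains u v where "u \<in> V" "v \<in> V" "u \<noteq> v" "e = {u, v}"
  using assms unfolding tree_def simple_graph_def by blast

lemma tree_edge_nonempty: "tree V E \<Longrightarrow> e \<in> E \<Longrightarrow> \<exists>a. a \<in> e"
  by (auto elim: tree_edgeE)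

lemma tree_edge_subset: "tree V E \<Longrightarrow> e \<in> E \<Longrightarrow> e \<subseteq> V"
  by (auto elim: tree_edgeE)

lemma tree_reachable: "tree V E \<Longrightarrow> x \<in> V \<Longrightarrow> y \<in> V \<Longrightarrow> reachable E x y"
  by (simp add: tree_def connected_graph_def reachable_def)

lemma tree_edge_ends_reachable:
  assumes "tree V E" "F \<subseteq> E" "e \<in> F" "x \<in> e" "y \<in> e"
  shows "reachable F x y"
proof -
  obtain u v where "e = {u, v}" using assms(1-3) by (blast elim: tree_edgeE)
  with assms(3-5) show ?thesis
    using reachable_edge[of u v F] reachable_sym[of F u v] by auto
qed

text \<open>A path joining the ends of a removed edge closes a cycle with it.\<close>

lemma tree_bridge:
  assumes T: "tree V E" and g: "{p, q} \<in> E"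
  shows "\<not> reachable (E - {{p, q}}) p q"
proof
  assume "reachable (E - {{p, q}}) p q"
  then obtain xs where xs: "simple_path (E - {{p, q}}) xs" "hd xs = p" "last xs = q"
    by (rule reachable_imp_simple_path)
  have pq: "p \<noteq> q" using T g by (auto elim!: tree_edgeE simp: doubleton_eq_iff)
  have ne: "xs \<noteq> []" using xs by (simp add: simple_path_def)
  have first: "xs ! 0 = p" and final: "xs ! (length xs - 1) = q"
    using xs ne by (simp_all add: hd_conv_nth last_conv_nth)
  then have "length xs \<noteq> 1" using pq by auto
  moreover have "length xs \<noteq> 2"
  proof
    assume "length xs = 2"
    then have "{xs ! 0, xs ! 1} \<in> E - {{p, q}}" using xs(1) by (simp add: simple_path_def)
    with first final \<open>length xs = 2\<close> show False by simp
  qed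
  moreover have "length xs \<noteq> 0" using ne by simp
  ultimately have len: "length xs \<ge> 3" by linarith
  have "is_cycle E xs" unfolding is_cycle_def
  proof (intro conjI allI impI len)
    show "distinct xs" using xs by (simp add: simple_path_def)
    fix i assume i: "i < length xs"
    show "{xs ! i, xs ! ((i + 1) mod length xs)} \<in> E"
    proof (cases "Suc i < length xs")
      case True
      then show ?thesis using xs(1) by (auto simp: simple_path_def)
    next
      case False
      with i have "Suc i = length xs" by simp
      then have "i = length xs - 1" "(i + 1) mod length xs = 0" by simp_all
      with first final g show ?thesis by (simp add: insert_commute)
    qed
  qed
  with T show False by (simp add: tree_def acyclic_graph_def)
qed

lemma tree_bridge_cover:
  assumes "tree V E" "{p, q} \<in> E" "x \<in> V"
  shows "reachable (E - {{p, q}}) p x \<or> reachable (E - {{p, q}}) q x"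
proof -
  have "p \<in> V" using assms tree_edge_subset by blast
  with assms have "reachable E p x" by (simp add: tree_reachable)
  from reachable_remove_edge[OF this, of "{p, q}"] show ?thesis
    by (auto simp: doubleton_eq_iff)
qed

lemma tree_bridge_sides:
  assumes "tree V E" "{p, q} \<in> E" "a \<in> V" "b \<in> V"
  shows "reachable (E - {{p, q}}) a b \<longleftrightarrow>
    (reachable (E - {{p, q}}) p a \<longleftrightarrow> reachable (E - {{p, q}}) p b)"
  using tree_bridge_cover[OF assms(1,2,3)] tree_bridge_cover[OF assms(1,2,4)]
    tree_bridge[OF assms(1,2)]
  by (meson reachable_sym reachable_trans)

definition edges_linked :: "'a set set \<Rightarrow> 'a set \<Rightarrow> 'a set \<Rightarrow> bool" where
  "edges_linked F e f \<longleftrightarrow> (\<exists>x\<in>e. \<exists>y\<in>f. reachable F x y)"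

lemma edges_linked_iff_reachable:
  assumes "tree V E" "F \<subseteq> E" "e \<in> F" "f \<in> F" "a \<in> e" "b \<in> f"
  shows "edges_linked F e f \<longleftrightarrow> reachable F a b"
  unfolding edges_linked_def
  using assms tree_edge_ends_reachable[OF assms(1,2,3)] tree_edge_ends_reachable[OF assms(1,2,4)]
  by (meson reachable_trans)

text \<open>The edges strictly between \<open>e\<close> and \<open>f\<close> on the path joining them in a tree.\<close>

definition separating_edges :: "'a set set \<Rightarrow> 'a set \<Rightarrow> 'a set \<Rightarrow> 'a set set" where
  "separating_edges E e f = {g \<in> E. g \<noteq> e \<and> g \<noteq> f \<and> \<not> edges_linked (E - {g}) e f}"

lemma separating_edges_subset: "separating_edges E e f \<subseteq> E"
  by (auto simp: separating_edges_def)

lemma separating_edges_of_meeting: "e \<inter> f \<noteq> {} \<Longrightarrow> separating_edges E e f = {}"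
  unfolding separating_edges_def edges_linked_def by (auto intro: reachable_refl)

lemma separating_edges_iff:
  assumes T: "tree V E" and g: "{p, q} \<in> E" and "e \<in> E" "f \<in> E" "a \<in> e" "b \<in> f"
  shows "{p, q} \<in> separating_edges E e f \<longleftrightarrow> {p, q} \<noteq> e \<and> {p, q} \<noteq> f \<and>
    (reachable (E - {{p, q}}) p a \<longleftrightarrow> \<not> reachable (E - {{p, q}}) p b)"
proof (cases "{p, q} = e \<or> {p, q} = f")
  case False
  have "a \<in> V" "b \<in> V" using assms tree_edge_subset by blast+
  moreover have "edges_linked (E - {{p, q}}) e f \<longleftrightarrow> reachable (E - {{p, q}}) a b"
    using False assms by (intro edges_linked_iff_reachable[OF T]) auto
  ultimately show ?thesis
    using False g tree_bridge_sides[OF T g] unfolding separating_edges_def by auto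
qed (auto simp: separating_edges_def)

lemma separating_edges_step:
  assumes T: "tree V E" and "g \<in> E" "g \<inter> f \<noteq> {}"
  shows "separating_edges E e f \<subseteq> insert g (separating_edges E e g)"
proof
  fix h assume h: "h \<in> separating_edges E e f"
  show "h \<in> insert g (separating_edges E e g)"
  proof (cases "h = g")
    case False
    obtain z where z: "z \<in> g" "z \<in> f" using assms by blast
    have "\<not> edges_linked (E - {h}) e g"
    proof
      assume "edges_linked (E - {h}) e g"
      then obtain x y where xy: "x \<in> e" "y \<in> g" "reachable (E - {h}) x y"
        unfolding edges_linked_def by blast
      moreover have "reachable (E - {h}) y z"
        using tree_edge_ends_reachable[OF T, of "E - {h}" g y z] assms False xy z by auto
      ultimately have "edges_linked (E - {h}) e f"
        using z unfolding edges_linked_def by (meson reachable_trans)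
      with h show False unfolding separating_edges_def by blast
    qed
    with h False show ?thesis unfolding separating_edges_def by blast
  qed simp
qed

section \<open>Removing two edges from a tree\<close>

definition reach_class :: "'a set \<Rightarrow> 'a set set \<Rightarrow> 'a \<Rightarrow> 'a set" where
  "reach_class V F u = {v \<in> V. reachable F u v}"

lemma components_eq_reach_classes: "components V F = {reach_class V F u | u. u \<in> V}"
  by (simp add: components_def reach_class_def reachable_def)

lemma reach_class_eq: "reachable F a b \<Longrightarrow> reach_class V F a = reach_class V F b"
  unfolding reach_class_def by (meson reachable_sym reachable_trans)

lemma edge_subset_reach_class_iff:
  assumes "tree V E" "F \<subseteq> E" "e \<in> F" "a \<in> e"
  shows "e \<subseteq> reach_class V F u \<longleftrightarrow> reachable F u a"
proof
  assume ua: "reachable F u a"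
  show "e \<subseteq> reach_class V F u"
  proof
    fix z assume z: "z \<in> e"
    have "reachable F u z" using ua tree_edge_ends_reachable[OF assms z] by (rule reachable_trans)
    moreover have "z \<in> V" using assms z tree_edge_subset by blast
    ultimately show "z \<in> reach_class V F u" by (simp add: reach_class_def)
  qed
qed (use assms in \<open>auto simp: reach_class_def\<close>)

lemma reachable_to_edge:
  assumes "reachable F x y" "y \<in> {c, d}"
  obtains r s where "{c, d} = {r, s}" "reachable (F - {{c, d}}) x r"
  using reachable_remove_edge[OF assms(1), of "{c, d}"]
proof
  assume xy: "reachable (F - {{c, d}}) x y"
  from assms(2) consider "y = c" | "y = d" by blast
  then show thesis
  proof cases
    case 1
    with xy show thesis by (intro that[of c d]) simp_all
  next
    case 2
    with xy show thesis by (intro that[of d c]) (simp_all add: insert_commute)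
  qed
qed (use that in blast)

text \<open>Two distinct edges \<open>{p, q}\<close> and \<open>{r, s}\<close> of a tree, oriented so that \<open>q\<close> and \<open>r\<close>
  are the ends facing each other. Removing both edges leaves the components of \<open>p\<close>, of
  \<open>q\<close> and \<open>r\<close>, and of \<open>s\<close>.\<close>

locale tree_edge_pair =
  fixes V :: "'a set" and E :: "'a set set" and p q r s :: 'a
  assumes tree: "tree V E"
    and edge_pq: "{p, q} \<in> E" and edge_rs: "{r, s} \<in> E" and distinct_edges: "{p, q} \<noteq> {r, s}"
    and middle: "reachable (E - {{p, q}, {r, s}}) q r"

lemma tree_edge_pairE:
  assumes T: "tree V E" and "g \<in> E" "h \<in> E" "g \<noteq> h"
  obtains p q r s where "g = {p, q}" "h = {r, s}" "tree_edge_pair V E p q r s"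
proof -
  obtain a b c d where g: "g = {a, b}" and h: "h = {c, d}" and "a \<in> V" "c \<in> V"
    using assms by (metis tree_edgeE)
  then have "reachable E c a" using T by (simp add: tree_reachable)
  moreover have "a \<in> g" by (simp add: g)
  ultimately obtain q p where qp: "g = {q, p}" "reachable (E - {g}) c q"
    unfolding g by (rule reachable_to_edge)
  from qp(2) have "reachable (E - {g}) q c" by (rule reachable_sym)
  moreover have "c \<in> h" by (simp add: h)
  ultimately obtain r s where rs: "h = {r, s}" "reachable (E - {g} - {h}) q r"
    unfolding h by (rule reachable_to_edge)
  have "E - {g} - {h} = E - {g, h}" by auto
  with assms qp rs show thesis
    by (intro that[of p q r s]) (auto simp: tree_edge_pair_def insert_commute)
qed

context tree_edge_pair
begin

abbreviation forest :: "'a set set" where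
  "forest \<equiv> E - {{p, q}, {r, s}}"

lemma ends_in_V: "p \<in> V" "q \<in> V" "r \<in> V" "s \<in> V"
  using tree_edge_subset[OF tree edge_pq] tree_edge_subset[OF tree edge_rs] by auto

lemma forest_subset: "forest \<subseteq> E" "forest \<subseteq> E - {{p, q}}" "forest \<subseteq> E - {{r, s}}"
  by auto

lemma reachable_qs_without_pq: "reachable (E - {{p, q}}) q s"
proof -
  have "{r, s} \<in> E - {{p, q}}" using edge_rs distinct_edges by simp
  then show ?thesis
    by (rule reachable_trans[OF reachable_mono[OF forest_subset(2) middle] reachable_edge])
qed

lemma reachable_pr_without_rs: "reachable (E - {{r, s}}) p r"
proof -
  have "{p, q} \<in> E - {{r, s}}" using edge_pq distinct_edges by simp
  then have "reachable (E - {{r, s}}) p q" by (rule reachable_edge)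
  then show ?thesis using reachable_mono[OF forest_subset(3) middle] by (rule reachable_trans)
qed

lemma forest_cover:
  assumes "x \<in> V"
  shows "reachable forest p x \<or> reachable forest q x \<or> reachable forest s x"
proof -
  have "reachable forest y x \<or> reachable forest q x \<or> reachable forest s x"
    if yx: "reachable (E - {{p, q}}) y x" for y
  proof -
    have rest: "E - {{p, q}} - {{r, s}} = forest" by auto
    from reachable_remove_edge[OF yx, of "{r, s}"] show ?thesis
    proof
      assume "\<exists>a b. {r, s} = {a, b} \<and> reachable (E - {{p, q}} - {{r, s}}) y a \<and>
        reachable (E - {{p, q}} - {{r, s}}) b x"
      then obtain b where b: "b = r \<or> b = s" "reachable forest b x"
        unfolding rest by (auto simp: doubleton_eq_iff)
      then show ?thesis using reachable_trans[OF middle] by blast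
    qed (simp add: rest)
  qed
  with tree_bridge_cover[OF tree edge_pq assms] show ?thesis by blast
qed

lemma not_reachable_pq: "\<not> reachable (E - {{p, q}}) p q"
  and not_reachable_rs: "\<not> reachable (E - {{r, s}}) r s"
  using tree_bridge[OF tree edge_pq] tree_bridge[OF tree edge_rs] by auto

lemma reachable_without_pq_iff_forest:
  assumes "x \<in> V"
  shows "reachable (E - {{p, q}}) p x \<longleftrightarrow> reachable forest p x"
proof
  assume px: "reachable (E - {{p, q}}) p x"
  have not_qx: "\<not> reachable (E - {{p, q}}) q x"
  proof
    assume "reachable (E - {{p, q}}) q x"
    then have "reachable (E - {{p, q}}) p q" by (rule reachable_trans[OF px reachable_sym])
    with not_reachable_pq show False ..
  qed
  from forest_cover[OF assms] consider "reachable forest p x" | "reachable forest q x"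
    | "reachable forest s x" by blast
  then show "reachable forest p x"
  proof cases
    case 2
    with not_qx show ?thesis using reachable_mono[OF forest_subset(2)] by blast
  next
    case 3
    then have "reachable (E - {{p, q}}) q x"
      by (rule reachable_trans[OF reachable_qs_without_pq reachable_mono[OF forest_subset(2)]])
    with not_qx show ?thesis ..
  qed
qed (rule reachable_mono[OF forest_subset(2)])

lemma reachable_without_rs_iff_forest:
  assumes "x \<in> V"
  shows "reachable (E - {{r, s}}) s x \<longleftrightarrow> reachable forest s x"
proof
  assume sx: "reachable (E - {{r, s}}) s x"
  have not_rx: "\<not> reachable (E - {{r, s}}) r x"
  proof
    assume "reachable (E - {{r, s}}) r x"
    then have "reachable (E - {{r, s}}) r s" using reachable_sym[OF sx] by (rule reachable_trans)
    with not_reachable_rs show False ..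
  qed
  have rq: "reachable (E - {{r, s}}) r q"
    using reachable_sym[OF reachable_mono[OF forest_subset(3) middle]] .
  from forest_cover[OF assms] consider "reachable forest p x" | "reachable forest q x"
    | "reachable forest s x" by blast
  then show "reachable forest s x"
  proof cases
    case 1
    then have "reachable (E - {{r, s}}) r x"
      by (rule reachable_trans[OF reachable_sym[OF reachable_pr_without_rs]
            reachable_mono[OF forest_subset(3)]])
    with not_rx show ?thesis ..
  next
    case 2
    then have "reachable (E - {{r, s}}) r x"
      by (rule reachable_trans[OF rq reachable_mono[OF forest_subset(3)]])
    with not_rx show ?thesis ..
  qed
qed (rule reachable_mono[OF forest_subset(3)])

lemma ends_not_reachable:
  "\<not> reachable forest p q" "\<not> reachable forest p s" "\<not> reachable forest q s"
proof -
  show "\<not> reachable forest p q"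
    using reachable_without_pq_iff_forest[OF ends_in_V(2)] not_reachable_pq by simp
  show "\<not> reachable forest p s"
  proof
    assume "reachable forest p s"
    then have "reachable (E - {{p, q}}) p s"
      using reachable_without_pq_iff_forest[OF ends_in_V(4)] by simp
    then have "reachable (E - {{p, q}}) p q"
      using reachable_sym[OF reachable_qs_without_pq] by (rule reachable_trans)
    with not_reachable_pq show False ..
  qed
  show "\<not> reachable forest q s"
  proof
    assume "reachable forest q s"
    then have "reachable (E - {{r, s}}) q s" by (rule reachable_mono[OF forest_subset(3)])
    with reachable_sym[OF reachable_mono[OF forest_subset(3) middle]]
    have "reachable (E - {{r, s}}) r s" by (rule reachable_trans)
    with not_reachable_rs show False ..
  qed
qed

abbreviation P where "P \<equiv> reach_class V forest p"
abbreviation Q where "Q \<equiv> reach_class V forest q"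
abbreviation S where "S \<equiv> reach_class V forest s"

lemma forest_components: "components V forest = {P, Q, S}"
proof -
  have "reach_class V forest u \<in> {P, Q, S}" if "u \<in> V" for u
    using forest_cover[OF that] reach_class_eq[of forest p u V] reach_class_eq[of forest q u V]
      reach_class_eq[of forest s u V]
    by auto
  moreover have "P \<in> components V forest" "Q \<in> components V forest" "S \<in> components V forest"
    using ends_in_V unfolding components_eq_reach_classes by blast+
  ultimately show ?thesis unfolding components_eq_reach_classes by blast
qed

lemma ends_in_classes: "p \<in> P" "q \<in> Q" "r \<in> Q" "s \<in> S"
  using ends_in_V middle by (simp_all add: reach_class_def)

lemma not_reachable_from_p_and_s: "\<not> (reachable forest p x \<and> reachable forest s x)"
proof
  assume "reachable forest p x \<and> reachable forest s x"
  then have "reachable forest p s" by (blast intro: reachable_trans[OF _ reachable_sym])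
  with ends_not_reachable(2) show False ..
qed

lemma ends_not_in_classes: "q \<notin> P" "r \<notin> P" "s \<notin> P" "s \<notin> Q" "p \<notin> S" "q \<notin> S"
proof -
  have "\<not> reachable forest p r"
  proof
    assume "reachable forest p r"
    then have "reachable forest p q" using reachable_sym[OF middle] by (rule reachable_trans)
    with ends_not_reachable(1) show False ..
  qed
  moreover have "\<not> reachable forest s p" "\<not> reachable forest s q"
    using ends_not_reachable(2,3) by (simp_all add: reachable_commute[of forest s])
  ultimately show "q \<notin> P" "r \<notin> P" "s \<notin> P" "s \<notin> Q" "p \<notin> S" "q \<notin> S"
    using ends_not_reachable by (simp_all add: reach_class_def)
qed

lemma classes_distinct: "P \<noteq> Q" "P \<noteq> S" "Q \<noteq> S"
  using ends_in_classes ends_not_in_classes by blast+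

lemma card_forest_components: "card (components V forest) = 3"
  using classes_distinct by (simp add: forest_components)

lemma middle_components_eq: "middle_components V E {p, q} {r, s} = {Q}"
proof -
  have "Q \<inter> {p, q} \<noteq> {}" "Q \<inter> {r, s} \<noteq> {}" "P \<inter> {r, s} = {}" "S \<inter> {p, q} = {}"
    using ends_in_classes ends_not_in_classes by auto
  then show ?thesis by (auto simp: middle_components_def forest_components)
qed

definition P_edges :: "'a set set" where "P_edges = {e \<in> forest. e \<subseteq> P}"
definition S_edges :: "'a set set" where "S_edges = {e \<in> forest. e \<subseteq> S}"

lemma m12_eq: "m12 V E {p, q} {r, s} = card P_edges * card S_edges"
proof -
  have "components V forest - middle_components V E {p, q} {r, s} = {P, S}"
    using classes_distinct by (auto simp: forest_components middle_components_eq)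
  then show ?thesis
    using classes_distinct by (simp add: m12_def edges_in_def P_edges_def S_edges_def)
qed

lemma both_separating_iff:
  assumes "e \<in> E" "f \<in> E" "a \<in> e" "b \<in> f"
  shows "{p, q} \<in> separating_edges E e f \<and> {r, s} \<in> separating_edges E e f \<longleftrightarrow>
    e \<in> forest \<and> f \<in> forest \<and>
    (reachable forest p a \<and> reachable forest s b \<or> reachable forest s a \<and> reachable forest p b)"
proof -
  have V: "a \<in> V" "b \<in> V" using assms tree_edge_subset[OF tree] by blast+
  have "{s, r} \<in> E" using edge_rs by (simp add: insert_commute)
  from separating_edges_iff[OF tree this assms]
  have sep_rs: "{r, s} \<in> separating_edges E e f \<longleftrightarrow> {r, s} \<noteq> e \<and> {r, s} \<noteq> f \<and>
      (reachable forest s a \<longleftrightarrow> \<not> reachable forest s b)"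
    by (simp add: insert_commute reachable_without_rs_iff_forest[OF V(1)]
        reachable_without_rs_iff_forest[OF V(2)])
  from separating_edges_iff[OF tree edge_pq assms]
  have sep_pq: "{p, q} \<in> separating_edges E e f \<longleftrightarrow> {p, q} \<noteq> e \<and> {p, q} \<noteq> f \<and>
      (reachable forest p a \<longleftrightarrow> \<not> reachable forest p b)"
    by (simp add: reachable_without_pq_iff_forest[OF V(1)]
        reachable_without_pq_iff_forest[OF V(2)])
  show ?thesis
    unfolding sep_rs sep_pq
    using assms(1,2) not_reachable_from_p_and_s[of a] not_reachable_from_p_and_s[of b]
    by blast
qed

lemma mem_P_edges_iff: "e \<in> forest \<Longrightarrow> a \<in> e \<Longrightarrow> e \<in> P_edges \<longleftrightarrow> reachable forest p a"
  and mem_S_edges_iff: "e \<in> forest \<Longrightarrow> a \<in> e \<Longrightarrow> e \<in> S_edges \<longleftrightarrow> reachable forest s a"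
  using edge_subset_reach_class_iff[OF tree forest_subset(1)]
  by (simp_all add: P_edges_def S_edges_def)

lemma P_edges_subset: "P_edges \<subseteq> forest" and S_edges_subset: "S_edges \<subseteq> forest"
  by (auto simp: P_edges_def S_edges_def)

lemma P_edges_S_edges_disjoint: "P_edges \<inter> S_edges = {}"
proof (intro equals0I)
  fix e assume e: "e \<in> P_edges \<inter> S_edges"
  then have "e \<in> forest" using P_edges_subset by blast
  moreover obtain a where "a \<in> e" using \<open>e \<in> forest\<close> tree_edge_nonempty[OF tree] by blast
  ultimately have "reachable forest p a \<and> reachable forest s a"
    using e mem_P_edges_iff mem_S_edges_iff by simp
  with not_reachable_from_p_and_s show False by blast
qed

lemma separated_pair_iff:
  "(e, f) \<in> off_diag E \<and> ({p, q}, {r, s}) \<in> off_diag (separating_edges E e f) \<longleftrightarrow>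
    (e, f) \<in> P_edges \<times> S_edges \<union> S_edges \<times> P_edges"
proof (cases "e \<in> forest \<and> f \<in> forest")
  case True
  then have "e \<in> E" "f \<in> E" by auto
  then obtain a b where ab: "a \<in> e" "b \<in> f" using tree_edge_nonempty[OF tree] by blast
  have "(e, f) \<in> off_diag E \<and> ({p, q}, {r, s}) \<in> off_diag (separating_edges E e f) \<longleftrightarrow>
      e \<noteq> f \<and> {p, q} \<in> separating_edges E e f \<and> {r, s} \<in> separating_edges E e f"
    using \<open>e \<in> E\<close> \<open>f \<in> E\<close> distinct_edges by (auto simp: off_diag_def)
  also have "\<dots> \<longleftrightarrow> e \<noteq> f \<and>
      (reachable forest p a \<and> reachable forest s b \<or> reachable forest s a \<and> reachable forest p b)"
    using both_separating_iff[OF \<open>e \<in> E\<close> \<open>f \<in> E\<close> ab] True by simp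
  also have "\<dots> \<longleftrightarrow> e \<in> P_edges \<and> f \<in> S_edges \<or> e \<in> S_edges \<and> f \<in> P_edges"
    using mem_P_edges_iff[of e a] mem_S_edges_iff[of e a] mem_P_edges_iff[of f b]
      mem_S_edges_iff[of f b] ab True not_reachable_from_p_and_s[of a]
    by auto
  finally show ?thesis by simp
next
  case False
  have "\<not> ((e, f) \<in> off_diag E \<and> ({p, q}, {r, s}) \<in> off_diag (separating_edges E e f))"
  proof
    assume "(e, f) \<in> off_diag E \<and> ({p, q}, {r, s}) \<in> off_diag (separating_edges E e f)"
    then have "e \<in> E" "f \<in> E" "{p, q} \<in> separating_edges E e f" "{r, s} \<in> separating_edges E e f"
      by (simp_all add: off_diag_def)
    then have "e \<in> forest \<and> f \<in> forest" by (auto simp: separating_edges_def)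
    with False show False ..
  qed
  moreover have "(e, f) \<notin> P_edges \<times> S_edges \<union> S_edges \<times> P_edges"
    using False P_edges_subset S_edges_subset by blast
  ultimately show ?thesis by blast
qed

lemma card_separated_pairs:
  assumes "finite E"
  shows "card {x \<in> off_diag E. ({p, q}, {r, s}) \<in> off_diag (separating_edges E (fst x) (snd x))}
    = 2 * m12 V E {p, q} {r, s}"
proof -
  have "{x \<in> off_diag E. ({p, q}, {r, s}) \<in> off_diag (separating_edges E (fst x) (snd x))}
      = {(e, f). (e, f) \<in> off_diag E \<and> ({p, q}, {r, s}) \<in> off_diag (separating_edges E e f)}"
    by auto
  also have "\<dots> = P_edges \<times> S_edges \<union> S_edges \<times> P_edges"
    unfolding separated_pair_iff by auto
  finally have "{x \<in> off_diag E. ({p, q}, {r, s}) \<in> off_diag (separating_edges E (fst x) (snd x))}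
      = P_edges \<times> S_edges \<union> S_edges \<times> P_edges" .
  moreover have "(P_edges \<times> S_edges) \<inter> (S_edges \<times> P_edges) = {}"
    using P_edges_S_edges_disjoint by blast
  moreover have "finite P_edges" "finite S_edges"
    using assms P_edges_subset S_edges_subset forest_subset(1) by (meson finite_subset)+
  ultimately show ?thesis by (simp add: card_Un_disjoint card_cartesian_product m12_eq)
qed

end

section \<open>Distance in the line graph\<close>

lemma line_walk_length_ge:
  assumes T: "tree V E" and fin: "finite E"
  shows "(e, f) \<in> line_adj E ^^ n \<Longrightarrow> e \<noteq> f \<Longrightarrow> card (separating_edges E e f) + 1 \<le> n"
proof (induction n arbitrary: f)
  case (Suc n)
  then obtain g where walk: "(e, g) \<in> line_adj E ^^ n" and step: "(g, f) \<in> line_adj E"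
    by (meson relpow_Suc_E)
  have g: "g \<in> E" "g \<inter> f \<noteq> {}" using step unfolding line_adj_def by auto
  show ?case
  proof (cases "e = g")
    case True
    then show ?thesis using separating_edges_of_meeting[OF g(2)] by simp
  next
    case False
    have finite: "finite (separating_edges E e g)"
      using fin separating_edges_subset by (rule finite_subset[rotated])
    then have "card (separating_edges E e f) \<le> card (insert g (separating_edges E e g))"
      using separating_edges_step[OF T g] by (intro card_mono) auto
    also have "\<dots> \<le> card (separating_edges E e g) + 1" using finite by (simp add: card_insert_if)
    finally have "card (separating_edges E e f) \<le> card (separating_edges E e g) + 1" .
    with Suc.IH[OF walk False] show ?thesis by simp
  qed
qed simp

lemma exists_first_edge:
  assumes "finite F" "reachable F q r" "q \<noteq> r"
  shows "\<exists>w. {q, w} \<in> F \<and> reachable (F - {{q, w}}) w r"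
  using assms
proof (induction "card F" arbitrary: F rule: less_induct)
  case less
  from less.prems(2,3) obtain w where "(q, w) \<in> adj_rel F" "reachable F w r"
    unfolding reachable_def by (metis converse_rtranclE)
  then have qw: "{q, w} \<in> F" and wr: "reachable F w r" by (simp_all add: adj_rel_def)
  from reachable_remove_edge[OF wr, of "{q, w}"] show ?case
  proof (elim disjE exE conjE)
    assume "reachable (F - {{q, w}}) w r"
    with qw show ?thesis by blast
  next
    fix a b assume ab: "{q, w} = {a, b}" "reachable (F - {{q, w}}) b r"
    show ?thesis
    proof (cases "b = q")
      case True
      \<comment> \<open>the walk returns to \<open>q\<close>: restart from there in the smaller graph\<close>
      have "card (F - {{q, w}}) < card F" using qw less.prems(1) by (meson card_Diff1_less)
      moreover have "finite (F - {{q, w}})" using less.prems(1) by simp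
      moreover have "reachable (F - {{q, w}}) q r" using ab(2) True by simp
      ultimately obtain w' where w': "{q, w'} \<in> F - {{q, w}}"
        "reachable (F - {{q, w}} - {{q, w'}}) w' r"
        using less.hyps less.prems(3) by blast
      have "F - {{q, w}} - {{q, w'}} \<subseteq> F - {{q, w'}}" by blast
      from reachable_mono[OF this w'(2)] w'(1) show ?thesis by blast
    next
      case False
      with ab show ?thesis using qw by (auto simp: doubleton_eq_iff)
    qed
  qed
qed

lemma separating_edges_shift:
  assumes T: "tree V E" and e: "e \<in> E" and f: "f \<in> E" and g: "g \<in> E"
    and q: "q \<in> e" "q \<in> g" and w: "w \<in> g" and r: "r \<in> f" and wr: "reachable (E - {e}) w r"
  shows "separating_edges E g f \<subseteq> separating_edges E e f - {g}"
proof
  fix h assume h: "h \<in> separating_edges E g f"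
  then have "h \<in> E" "h \<noteq> g" using separating_edges_subset by (auto simp: separating_edges_def)
  then obtain x y where xy: "h = {x, y}" "{x, y} \<in> E" using T by (metis tree_edgeE)
  have "h \<noteq> e"
  proof
    assume "h = e"
    then have "edges_linked (E - {h}) g f" using w wr r by (auto simp: edges_linked_def)
    with h show False by (simp add: separating_edges_def)
  qed
  \<comment> \<open>\<open>e\<close> and \<open>g\<close> share the end \<open>q\<close>, so they lie on the same side of \<open>h\<close>\<close>
  with h \<open>h \<noteq> g\<close> separating_edges_iff[OF T xy(2) g f q(2) r]
    separating_edges_iff[OF T xy(2) e f q(1) r]
  show "h \<in> separating_edges E e f - {g}" by (simp add: xy(1))
qed

lemma exists_separating_neighbour:
  assumes T: "tree V E" and fin: "finite E" and e: "e \<in> E" and f: "f \<in> E" and "e \<inter> f = {}"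
  obtains g where "(e, g) \<in> line_adj E" "g \<in> separating_edges E e f"
    "separating_edges E g f \<subseteq> separating_edges E e f - {g}"
proof -
  have "e \<noteq> f" using T e \<open>e \<inter> f = {}\<close> by (auto elim: tree_edgeE)
  then obtain p q r s where ef: "e = {p, q}" "f = {r, s}" and pair: "tree_edge_pair V E p q r s"
    using tree_edge_pairE[OF T e f] by metis
  have "finite (E - {e, f})" using fin by simp
  moreover have "reachable (E - {e, f}) q r" using tree_edge_pair.middle[OF pair] ef by simp
  moreover have "q \<noteq> r" using ef \<open>e \<inter> f = {}\<close> by auto
  ultimately have "\<exists>w. {q, w} \<in> E - {e, f} \<and> reachable (E - {e, f} - {{q, w}}) w r"
    by (rule exists_first_edge)
  then obtain w where w: "{q, w} \<in> E - {e, f}" "reachable (E - {e, f} - {{q, w}}) w r"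
    by blast
  define g where "g = {q, w}"
  have g: "g \<in> E" "g \<noteq> e" "g \<noteq> f" and q: "q \<in> e" "q \<in> g" and r: "r \<in> f"
    using w(1) by (auto simp: g_def ef)
  have "E - {e, f} - {g} \<subseteq> E - {g}" "E - {e, f} - {g} \<subseteq> E - {e}" by blast+
  from this[THEN reachable_mono] w(2) have wr: "reachable (E - {g}) w r" "reachable (E - {e}) w r"
    unfolding g_def by simp_all
  have "(e, g) \<in> line_adj E" using e g q by (auto simp: line_adj_def)
  moreover have "g \<in> separating_edges E e f"
  proof -
    have "\<not> reachable (E - {g}) q r"
    proof
      assume "reachable (E - {g}) q r"
      then have "reachable (E - {{q, w}}) q w" using reachable_sym[OF wr(1)]
        unfolding g_def by (rule reachable_trans)
      with tree_bridge[OF T] g(1) show False by (simp add: g_def)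
    qed
    then show ?thesis
      using separating_edges_iff[OF T _ e f q(1) r, of q w] g by (simp add: g_def)
  qed
  moreover have "separating_edges E g f \<subseteq> separating_edges E e f - {g}"
    using separating_edges_shift[OF T e f g(1) q _ r wr(2)] by (simp add: g_def)
  ultimately show thesis by (rule that)
qed

lemma line_walk_length_le:
  assumes T: "tree V E" and fin: "finite E"
  shows "e \<in> E \<Longrightarrow> f \<in> E \<Longrightarrow>
    \<exists>n. (e, f) \<in> line_adj E ^^ n \<and> n \<le> card (separating_edges E e f) + 1"
proof (induction "card (separating_edges E e f)" arbitrary: e rule: less_induct)
  case less
  show ?case
  proof (cases "e \<inter> f = {}")
    case False
    then have "(e, f) \<in> line_adj E ^^ 1 \<or> (e, f) \<in> line_adj E ^^ 0"
      using less.prems by (auto simp: line_adj_def)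
    then show ?thesis using le_add2 zero_le by blast
  next
    case True
    obtain g where g: "(e, g) \<in> line_adj E" "g \<in> separating_edges E e f"
      and sub: "separating_edges E g f \<subseteq> separating_edges E e f - {g}"
      using exists_separating_neighbour[OF T fin less.prems True] by blast
    have finite: "finite (separating_edges E e f)"
      using fin separating_edges_subset by (rule finite_subset[rotated])
    then have less_card: "card (separating_edges E g f) < card (separating_edges E e f)"
      using g(2) card_mono[OF _ sub] card_Diff1_less by (metis finite_Diff order_le_less_trans)
    moreover have "g \<in> E" using g(1) by (simp add: line_adj_def)
    ultimately obtain n where walk: "(g, f) \<in> line_adj E ^^ n"
      and "n \<le> card (separating_edges E g f) + 1"
      using less.hyps less.prems(2) by blast
    then have "Suc n \<le> card (separating_edges E e f) + 1" using less_card by simp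
    moreover have "(e, f) \<in> line_adj E ^^ Suc n" using g(1) walk by (rule relpow_Suc_I2)
    ultimately show ?thesis by blast
  qed
qed

lemma edge_dist_tree:
  assumes "tree V E" "finite E" "e \<in> E" "f \<in> E" "e \<noteq> f"
  shows "edge_dist E e f = card (separating_edges E e f) + 1"
  unfolding edge_dist_def
proof (rule Least_equality)
  obtain n where "(e, f) \<in> line_adj E ^^ n" "n \<le> card (separating_edges E e f) + 1"
    using line_walk_length_le[OF assms(1-4)] by blast
  with line_walk_length_ge[OF assms(1,2)] assms(5)
  show "(e, f) \<in> line_adj E ^^ (card (separating_edges E e f) + 1)" by (metis le_antisym)
qed (use line_walk_length_ge[OF assms(1,2)] assms(5) in blast)

section \<open>The edge-Wiener indices\<close>

lemma tree_two_edges_removed_components: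
  assumes "tree V E" "g \<in> E" "h \<in> E" "g \<noteq> h"
  shows "card (components V (E - {g, h})) = 3 \<and> card (middle_components V E g h) = 1"
proof -
  obtain p q r s where "g = {p, q}" "h = {r, s}" and pair: "tree_edge_pair V E p q r s"
    using tree_edge_pairE[OF assms] by metis
  with tree_edge_pair.card_forest_components[OF pair] tree_edge_pair.middle_components_eq[OF pair]
  show ?thesis by simp
qed

lemma m12_commute: "m12 V E g h = m12 V E h g"
proof -
  have "middle_components V E g h = middle_components V E h g"
    unfolding middle_components_def by (auto simp: insert_commute)
  then show ?thesis by (simp add: m12_def insert_commute)
qed

text \<open>Double counting the pairs \<open>((e, f), (g, h))\<close> of ordered edge pairs such that \<open>g\<close> and
  \<open>h\<close> both separate \<open>e\<close> from \<open>f\<close>.\<close>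

lemma sum_card_separating_pairs:
  assumes T: "tree V E" and fin: "finite E"
  shows "(\<Sum>(e, f)\<in>off_diag E. card (off_diag (separating_edges E e f)))
    = 2 * (\<Sum>(g, h)\<in>off_diag E. m12 V E g h)"
proof -
  let ?sep_pairs = "\<lambda>x. off_diag (separating_edges E (fst x) (snd x))"
  have "(\<Sum>(e, f)\<in>off_diag E. card (off_diag (separating_edges E e f)))
      = (\<Sum>x\<in>off_diag E. card {y \<in> off_diag E. y \<in> ?sep_pairs x})"
  proof (rule sum.cong[OF refl])
    fix x
    have "?sep_pairs x \<subseteq> off_diag E" by (intro off_diag_mono separating_edges_subset)
    then show "(case x of (e, f) \<Rightarrow> card (off_diag (separating_edges E e f)))
        = card {y \<in> off_diag E. y \<in> ?sep_pairs x}"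
      by (simp add: case_prod_beta Int_absorb1 Collect_conj_eq[symmetric] Int_def[symmetric])
  qed
  also have "\<dots> = (\<Sum>y\<in>off_diag E. card {x \<in> off_diag E. y \<in> ?sep_pairs x})"
    using fin by (intro sum_card_filter_swap finite_off_diag)
  also have "\<dots> = (\<Sum>(g, h)\<in>off_diag E. 2 * m12 V E g h)"
  proof (rule sum.cong[OF refl])
    fix y assume "y \<in> off_diag E"
    then obtain g h where y: "y = (g, h)" "g \<in> E" "h \<in> E" "g \<noteq> h" by (auto simp: off_diag_def)
    then obtain p q r s where "g = {p, q}" "h = {r, s}" and pair: "tree_edge_pair V E p q r s"
      using tree_edge_pairE[OF T] by metis
    with tree_edge_pair.card_separated_pairs[OF pair fin] y
    show "card {x \<in> off_diag E. y \<in> ?sep_pairs x} = (case y of (g, h) \<Rightarrow> 2 * m12 V E g h)"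
      by simp
  qed
  finally show ?thesis by (simp add: sum_distrib_left case_prod_beta)
qed

lemma edge_hyper_wiener_tree_eq:
  assumes "tree V E" "finite E"
  shows "edge_hyper_wiener E = 2 * edge_wiener E
    + (\<Sum>(e, f)\<in>off_diag E. real (card (off_diag (separating_edges E e f)))) / 4
    - real (card (off_diag E)) / 2"
proof -
  let ?s = "\<lambda>e f. real (card (separating_edges E e f))"
  have dist: "real (edge_dist E e f) = ?s e f + 1" if "(e, f) \<in> off_diag E" for e f
    using that edge_dist_tree[OF assms] by (simp add: off_diag_def)
  have sep_pairs: "real (card (off_diag (separating_edges E e f))) = ?s e f ^ 2 - ?s e f" for e f
  proof -
    have "finite (separating_edges E e f)"
      using assms(2) separating_edges_subset by (rule finite_subset[rotated])
    then show ?thesis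
      by (cases "card (separating_edges E e f)")
        (simp_all add: card_off_diag power2_eq_square algebra_simps)
  qed
  have "(\<Sum>(e, f)\<in>off_diag E. real (edge_dist E e f))
      = (\<Sum>(e, f)\<in>off_diag E. ?s e f) + real (card (off_diag E))"
    by (simp add: dist sum.distrib case_prod_beta cong: sum.cong)
  moreover have "(\<Sum>(e, f)\<in>off_diag E. real (edge_dist E e f) ^ 2)
      = (\<Sum>(e, f)\<in>off_diag E. ?s e f ^ 2) + 2 * (\<Sum>(e, f)\<in>off_diag E. ?s e f)
        + real (card (off_diag E))"
    by (simp add: dist power2_sum sum.distrib sum_distrib_left case_prod_beta cong: sum.cong)
  moreover have "(\<Sum>(e, f)\<in>off_diag E. real (card (off_diag (separating_edges E e f))))
      = (\<Sum>(e, f)\<in>off_diag E. ?s e f ^ 2) - (\<Sum>(e, f)\<in>off_diag E. ?s e f)"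
    by (simp add: sep_pairs sum_subtractf case_prod_beta)
  ultimately show ?thesis
    unfolding edge_hyper_wiener_def edge_wiener_def edge_pairs_eq_off_diag
    by (simp add: field_simps)
qed

lemma two_times_choose_two: "2 * (m choose 2) = m * (m - 1)"
proof -
  have "even (m * (m - 1))" by (cases "even m") auto
  then show ?thesis by (simp add: choose_two)
qed

theorem mainTheorem4:
  fixes V :: "'a set" and E :: "'a set set" and ed :: "nat \<Rightarrow> 'a set" and m :: nat
  assumes "tree V E"
    and "bij_betw ed {1..m} E"
  shows "(\<forall>k\<in>{1..m}. \<forall>l\<in>{1..m}. k \<noteq> l \<longrightarrow>
            card (components V (E - {ed k, ed l})) = 3 \<and>
            card (middle_components V E (ed k) (ed l)) = 1)
       \<and> edge_hyper_wiener E =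
           2 * edge_wiener E
           + real (\<Sum>k=1..m-1. \<Sum>l=k+1..m. m12 V E (ed k) (ed l))
           - real (m choose 2)"
proof
  have inj: "inj_on ed {1..m}" and img: "ed ` {1..m} = E"
    using assms(2) by (simp_all add: bij_betw_def)
  show "\<forall>k\<in>{1..m}. \<forall>l\<in>{1..m}. k \<noteq> l \<longrightarrow>
      card (components V (E - {ed k, ed l})) = 3 \<and> card (middle_components V E (ed k) (ed l)) = 1"
    using tree_two_edges_removed_components[OF assms(1)] inj img by (auto simp: inj_on_eq_iff)
next
  define M where "M = (\<Sum>k=1..m-1. \<Sum>l=k+1..m. m12 V E (ed k) (ed l))"
  have fin: "finite E" and card: "card E = m"
    using assms(2) bij_betw_finite bij_betw_same_card by fastforce+
  have "(\<Sum>(e, f)\<in>off_diag E. card (off_diag (separating_edges E e f))) = 4 * M"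
    using sum_card_separating_pairs[OF assms(1) fin] sum_off_diag_reindex[OF assms(2), of "m12 V E"]
      sum_off_diag_symmetric[where f = "\<lambda>k l. m12 V E (ed k) (ed l)" and m = m, OF m12_commute]
    by (simp add: M_def)
  then have "(\<Sum>(e, f)\<in>off_diag E. real (card (off_diag (separating_edges E e f)))) = 4 * real M"
    by (metis (mono_tags, lifting) of_nat_sum case_prod_beta of_nat_mult of_nat_numeral sum.cong)
  moreover have "card (off_diag E) = 2 * (m choose 2)"
    using fin card by (simp add: card_off_diag two_times_choose_two)
  ultimately show "edge_hyper_wiener E = 2 * edge_wiener E + real M - real (m choose 2)"
    unfolding edge_hyper_wiener_tree_eq[OF assms(1) fin] by simp
qed

end
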